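(* Let $G=H\oplus_3 K$ be a $3$-sum of $2$-connected cubic graphs $H$ and $K$ such that $\pi(G)=4$. If $\pi(H)\ge 5$ or $\pi(K)\ge 5$, then, with respect to every perfect-matching $4$-cover of $G$, each edge of the principal $3$-edge-cut is doubly covered.
   Context: Graphs are finite; loops and multiple edges are allowed. For a bridgeless cubic graph $G$, the perfect matching index $\pi(G)$ is the smallest number of perfect matchings whose union is $E(G)$; a perfect-matching $4$-cover is a set of four perfect matchings whose union is $E(G)$, and an edge is doubly covered if it belongs to exactly two of them. A $3$-sum $H\oplus_3 K$ with distinguished vertices $u\in V(H)$, $v\in V(K)$ is obtained by deleting $u$ and $v$ and joining the three dangling edge-ends formerly incident with $u$ bijectively to the three dangling edge-ends formerly incident with $v$; the three new edges form the principal $3$-edge-cut. *)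

theory Defs
  imports Main
begin

text \<open>Finite multigraphs (loops and parallel edges allowed). Each edge has a set of
  ends of cardinality 1 (a loop) or 2 (an ordinary edge).\<close>

record ('v, 'e) mgraph =
  verts :: "'v set"
  edges :: "'e set"
  ends  :: "'e \<Rightarrow> 'v set"

definition wf_mgraph :: "('v, 'e) mgraph \<Rightarrow> bool" where
  "wf_mgraph G \<longleftrightarrow> finite (verts G) \<and> finite (edges G) \<and>
     (\<forall>e\<in>edges G. ends G e \<subseteq> verts G \<and> 1 \<le> card (ends G e) \<and> card (ends G e) \<le> 2)"

definition is_loop :: "('v, 'e) mgraph \<Rightarrow> 'e \<Rightarrow> bool" where
  "is_loop G e \<longleftrightarrow> card (ends G e) = 1"

definition degree :: "('v, 'e) mgraph \<Rightarrow> 'v \<Rightarrow> nat" where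
  "degree G x = card {e \<in> edges G. x \<in> ends G e \<and> \<not> is_loop G e}
              + 2 * card {e \<in> edges G. x \<in> ends G e \<and> is_loop G e}"

definition cubic :: "('v, 'e) mgraph \<Rightarrow> bool" where
  "cubic G \<longleftrightarrow> wf_mgraph G \<and> (\<forall>x\<in>verts G. degree G x = 3)"

definition adj :: "('v, 'e) mgraph \<Rightarrow> 'v \<Rightarrow> 'v \<Rightarrow> bool" where
  "adj G x y \<longleftrightarrow> (\<exists>e\<in>edges G. x \<in> ends G e \<and> y \<in> ends G e)"

definition connected :: "('v, 'e) mgraph \<Rightarrow> bool" where
  "connected G \<longleftrightarrow> verts G \<noteq> {} \<and>
     (\<forall>x\<in>verts G. \<forall>y\<in>verts G. (adj G)\<^sup>*\<^sup>* x y)"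

definition delete_vertex :: "('v, 'e) mgraph \<Rightarrow> 'v \<Rightarrow> ('v, 'e) mgraph" where
  "delete_vertex G w = \<lparr> verts = verts G - {w}, edges = {e \<in> edges G. w \<notin> ends G e},
                          ends = ends G \<rparr>"

definition two_connected :: "('v, 'e) mgraph \<Rightarrow> bool" where
  "two_connected G \<longleftrightarrow> wf_mgraph G \<and> card (verts G) \<ge> 3 \<and> connected G \<and>
     (\<forall>w\<in>verts G. connected (delete_vertex G w))"

definition perfect_matching :: "('v, 'e) mgraph \<Rightarrow> 'e set \<Rightarrow> bool" where
  "perfect_matching G M \<longleftrightarrow> M \<subseteq> edges G \<and> (\<forall>e\<in>M. \<not> is_loop G e) \<and>
     (\<forall>x\<in>verts G. \<exists>!e. e \<in> M \<and> x \<in> ends G e)"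

definition pm_index :: "('v, 'e) mgraph \<Rightarrow> nat" where
  "pm_index G = (LEAST k. \<exists>M :: nat \<Rightarrow> 'e set.
      (\<forall>i<k. perfect_matching G (M i)) \<and> (\<Union>i<k. M i) = edges G)"

definition pm_4cover :: "('v, 'e) mgraph \<Rightarrow> (nat \<Rightarrow> 'e set) \<Rightarrow> bool" where
  "pm_4cover G M \<longleftrightarrow> (\<forall>i<4. perfect_matching G (M i)) \<and> (\<Union>i<4. M i) = edges G"

definition doubly_covered :: "(nat \<Rightarrow> 'e set) \<Rightarrow> 'e \<Rightarrow> bool" where
  "doubly_covered M e \<longleftrightarrow> card {i. i < 4 \<and> e \<in> M i} = 2"

definition incident :: "('v, 'e) mgraph \<Rightarrow> 'v \<Rightarrow> 'e set" where
  "incident G x = {e \<in> edges G. x \<in> ends G e}"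

definition other_end :: "('v, 'e) mgraph \<Rightarrow> 'v \<Rightarrow> 'e \<Rightarrow> 'v" where
  "other_end G x e = (THE y. ends G e = {x, y})"

text \<open>3-sum: delete u from H and v from K; the H-edge e at u and the K-edge sigma e at v
  are merged into a single new edge, represented by Inl e, joining the other end of e
  with the other end of sigma e.\<close>
definition three_sum :: "('v, 'e) mgraph \<Rightarrow> 'v \<Rightarrow> ('w, 'f) mgraph \<Rightarrow> 'w \<Rightarrow> ('e \<Rightarrow> 'f)
    \<Rightarrow> ('v + 'w, 'e + 'f) mgraph" where
  "three_sum H u K v \<sigma> = \<lparr>
     verts = Inl ` (verts H - {u}) \<union> Inr ` (verts K - {v}),
     edges = Inl ` edges H \<union> Inr ` (edges K - incident K v),
     ends = (\<lambda>x. case x of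
               Inl e \<Rightarrow> (if u \<in> ends H e
                         then {Inl (other_end H u e), Inr (other_end K v (\<sigma> e))}
                         else Inl ` ends H e)
             | Inr f \<Rightarrow> Inr ` ends K f) \<rparr>"

definition principal_cut :: "('v, 'e) mgraph \<Rightarrow> 'v \<Rightarrow> ('e + 'f) set" where
  "principal_cut H u = Inl ` incident H u"

end

theory Submission
  imports Defs
begin

(* Every perfect matching of G meets the principal cut in an odd number of edges, since the
   H-side of the cut has |V(H)| - 1 vertices, an odd number. At the H-end x of a cut edge the
   three edges at x have cover counts at least 1 summing to 4, so no cut edge is covered more
   than twice. If some cut edge were covered only once, the four (odd) numbers of cut edges
   in the matchings would sum to at most 1 + 2 + 2 = 5, so every matching would meet the cut
   exactly once. Contracting either side of the cut then turns the 4-cover of G into a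
   4-cover of H and one of K, contradicting pm_index H >= 5 or pm_index K >= 5. *)

lemma ex1_iff_card_eq_1: "(\<exists>!x. P x) \<longleftrightarrow> card {x. P x} = 1"
  by (auto simp: card_1_singleton_iff set_eq_iff)

lemma perfect_matching_iff_card_incident:
  "perfect_matching G M \<longleftrightarrow> M \<subseteq> edges G \<and> (\<forall>e\<in>M. \<not> is_loop G e) \<and>
     (\<forall>x\<in>verts G. card (M \<inter> incident G x) = 1)"
proof -
  have "M \<inter> incident G x = {e. e \<in> M \<and> x \<in> ends G e}" if "M \<subseteq> edges G" for x
    using that by (auto simp: incident_def)
  then show ?thesis
    unfolding perfect_matching_def ex1_iff_card_eq_1 by auto
qed

lemma sum_card_filter_swap:
  assumes "finite X" "finite Y"
  shows "(\<Sum>x\<in>X. card {y\<in>Y. P x y}) = (\<Sum>y\<in>Y. card {x\<in>X. P x y})"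
  using sum.swap_restrict[OF assms, of "\<lambda>_ _. 1::nat" P] by simp

lemma ends_eq_doubleton:
  assumes "wf_mgraph G" "e \<in> edges G" "\<not> is_loop G e" "x \<in> ends G e"
  shows "\<exists>y. ends G e = {x, y} \<and> y \<noteq> x \<and> y \<in> verts G"
proof -
  have "card (ends G e) = 2" "ends G e \<subseteq> verts G"
    using assms unfolding wf_mgraph_def is_loop_def by force+
  then show ?thesis
    using assms(4) by (auto simp: card_2_iff)
qed

lemma other_end_eqI:
  assumes "ends G e = {x, y}" "y \<noteq> x"
  shows "other_end G x e = y"
  unfolding other_end_def using assms by (rule_tac the_equality) (auto simp: doubleton_eq_iff)

lemma even_sum_degree:
  assumes "wf_mgraph G"
  shows "even (\<Sum>x\<in>verts G. degree G x)"
proof -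
  have fin: "finite (verts G)" "finite (edges G)"
    using assms by (auto simp: wf_mgraph_def)
  have "(\<Sum>x\<in>verts G. card {e \<in> edges G. x \<in> ends G e \<and> \<not> is_loop G e})
      = (\<Sum>e\<in>edges G. card {x \<in> verts G. x \<in> ends G e \<and> \<not> is_loop G e})"
    using fin by (rule sum_card_filter_swap)
  also have "even \<dots>"
  proof (rule dvd_sum)
    fix e assume e: "e \<in> edges G"
    have "card (ends G e) \<le> 2" "ends G e \<subseteq> verts G"
      using assms e by (auto simp: wf_mgraph_def)
    then have "\<not> is_loop G e \<Longrightarrow> card (ends G e) = 2"
      using assms e by (auto simp: wf_mgraph_def is_loop_def)
    moreover have "{x \<in> verts G. x \<in> ends G e \<and> \<not> is_loop G e}
        = (if is_loop G e then {} else ends G e)"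
      using \<open>ends G e \<subseteq> verts G\<close> by auto
    ultimately show "even (card {x \<in> verts G. x \<in> ends G e \<and> \<not> is_loop G e})"
      by auto
  qed
  finally show ?thesis
    by (simp add: degree_def sum.distrib sum_distrib_left[symmetric])
qed

lemma cubic_even_card_verts: "cubic G \<Longrightarrow> even (card (verts G))"
  using even_sum_degree[of G] by (simp add: cubic_def)

lemma two_connected_cubic_no_loop:
  assumes conn: "two_connected G" and cub: "cubic G" and l: "l \<in> edges G"
  shows "\<not> is_loop G l"
proof
  assume loop: "is_loop G l"
  have wf: "wf_mgraph G" using cub by (simp add: cubic_def)
  then obtain x where x: "ends G l = {x}" "x \<in> verts G"
    using l loop by (auto simp: wf_mgraph_def is_loop_def card_1_singleton_iff)
  let ?A = "{e \<in> edges G. x \<in> ends G e \<and> \<not> is_loop G e}"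
  let ?B = "{e \<in> edges G. x \<in> ends G e \<and> is_loop G e}"
  have "card ?A + 2 * card ?B = 3"
    using cub x by (simp add: cubic_def degree_def)
  moreover have "card ?B \<noteq> 0"
    using wf l x loop by (auto simp: wf_mgraph_def)
  ultimately have "card ?A = 1" by presburger
  then obtain e0 where A: "?A = {e0}" by (rule card_1_singletonE)
  then obtain w where w: "ends G e0 = {x, w}" "w \<noteq> x" "w \<in> verts G"
    using ends_eq_doubleton[OF wf, of e0 x] by auto
  \<comment> \<open>The only edge from x to another vertex goes to w, so deleting w isolates x.\<close>
  have "card (verts G) \<ge> 3" using conn by (simp add: two_connected_def)
  then obtain z where z: "z \<in> verts G" "z \<noteq> x" "z \<noteq> w"
    by (metis card_le_Suc_iff numeral_3_eq_3 insert_iff)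
  let ?D = "delete_vertex G w"
  have "(adj ?D)\<^sup>*\<^sup>* x z"
    using conn w(3) x z w unfolding two_connected_def connected_def delete_vertex_def by auto
  moreover have "y = x" if "adj ?D x y" for y
    using that A w by (auto simp: adj_def delete_vertex_def is_loop_def card_1_singleton_iff)
  ultimately have "z = x"
    by (induction rule: rtranclp_induct) auto
  with z show False by simp
qed

lemma two_connected_cubic_card_incident:
  assumes "two_connected G" "cubic G" "x \<in> verts G"
  shows "card (incident G x) = 3"
proof -
  have no_loops: "{e \<in> edges G. x \<in> ends G e \<and> is_loop G e} = {}"
    and non_loops: "{e \<in> edges G. x \<in> ends G e \<and> \<not> is_loop G e} = incident G x"
    using two_connected_cubic_no_loop[OF assms(1,2)] by (auto simp: incident_def)
  have "degree G x = 3"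
    using assms by (simp add: cubic_def)
  then show ?thesis
    unfolding degree_def no_loops non_loops by simp
qed

lemma two_connected_cubic_ends_incident:
  assumes "two_connected G" "cubic G" "e \<in> incident G x"
  shows "ends G e = {x, other_end G x e} \<and> other_end G x e \<noteq> x \<and> other_end G x e \<in> verts G"
proof -
  have "wf_mgraph G" "e \<in> edges G" "x \<in> ends G e"
    using assms by (auto simp: cubic_def incident_def)
  then show ?thesis
    using ends_eq_doubleton two_connected_cubic_no_loop[OF assms(1,2)] other_end_eqI by metis
qed

lemma pm_index_le:
  assumes "\<forall>i<k. perfect_matching G (M i)" "(\<Union>i<k. M i) = edges G"
  shows "pm_index G \<le> k"
  unfolding pm_index_def using assms by (blast intro: Least_le)

lemma perfect_matching_card_odd_cut:
  assumes wf: "wf_mgraph G" and pm: "perfect_matching G M"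
    and A: "A \<subseteq> verts G" "odd (card A)"
  shows "odd (card {e \<in> M. card (ends G e \<inter> A) = 1})"
proof -
  define c where "c e = card (ends G e \<inter> A)" for e
  have fin: "finite A" "finite M"
    using wf pm A(1) by (auto simp: wf_mgraph_def perfect_matching_def intro: finite_subset)
  have "card A = (\<Sum>x\<in>A. card {e \<in> M. x \<in> ends G e})"
    using pm A(1) by (simp add: perfect_matching_def ex1_iff_card_eq_1 subset_iff)
  also have "\<dots> = (\<Sum>e\<in>M. card {x \<in> A. x \<in> ends G e})"
    using fin by (rule sum_card_filter_swap)
  also have "\<dots> = (\<Sum>e\<in>M. c e)"
    by (simp add: c_def Collect_conj_eq Int_commute)
  also have "\<dots> = (\<Sum>e\<in>M \<inter> {e. c e = 1}. c e) + (\<Sum>e\<in>M - {e. c e = 1}. c e)"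
    using fin(2) by (rule sum.Int_Diff)
  also have "(\<Sum>e\<in>M \<inter> {e. c e = 1}. c e) = card {e \<in> M. c e = 1}"
    by (simp add: Collect_conj_eq)
  finally have "card A = card {e \<in> M. c e = 1} + (\<Sum>e\<in>M - {e. c e = 1}. c e)" .
  moreover have "even (\<Sum>e\<in>M - {e. c e = 1}. c e)"
  proof (rule dvd_sum)
    fix e assume e: "e \<in> M - {e. c e = 1}"
    have "e \<in> edges G"
      using e pm by (auto simp: perfect_matching_def)
    then have "finite (ends G e)" "card (ends G e) \<le> 2"
      using wf by (auto simp: wf_mgraph_def intro: finite_subset)
    then have "c e \<le> 2"
      unfolding c_def by (meson Int_lower1 card_mono order_trans)
    moreover have "c e \<noteq> 1"
      using e by simp
    ultimately show "even (c e)" by presburger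
  qed
  ultimately show ?thesis
    using A(2) by (simp add: c_def)
qed

lemma odd_summands_eq_1:
  fixes n :: "nat \<Rightarrow> nat"
  assumes odd: "\<forall>i<k. odd (n i)" and small: "(\<Sum>i<k. n i) < k + 2" and j: "j < k"
  shows "n j = 1"
proof -
  have "(\<Sum>i\<in>{..<k} - {j}. 1) \<le> (\<Sum>i\<in>{..<k} - {j}. n i)"
    using odd by (intro sum_mono) (auto simp: Suc_le_eq intro: odd_pos)
  then have "n j + (k - 1) \<le> (\<Sum>i<k. n i)"
    using j by (simp add: sum.remove)
  moreover have "odd (n j)"
    using odd j by blast
  ultimately show ?thesis
    using small j by presburger
qed

definition cover_count :: "(nat \<Rightarrow> 'e set) \<Rightarrow> nat \<Rightarrow> 'e \<Rightarrow> nat" where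
  "cover_count M k e = card {i. i < k \<and> e \<in> M i}"

lemma doubly_covered_iff_cover_count: "doubly_covered M e \<longleftrightarrow> cover_count M 4 e = 2"
  by (simp add: doubly_covered_def cover_count_def)

lemma cover_count_pos: "e \<in> (\<Union>i<k. M i) \<Longrightarrow> 0 < cover_count M k e"
  by (auto simp: cover_count_def card_gt_0_iff)

lemma sum_cover_count:
  assumes "finite S"
  shows "(\<Sum>e\<in>S. cover_count M k e) = (\<Sum>i<k. card (M i \<inter> S))"
proof -
  have "(\<Sum>e\<in>S. cover_count M k e) = (\<Sum>e\<in>S. card {i \<in> {..<k}. e \<in> M i})"
    by (simp add: cover_count_def)
  also have "\<dots> = (\<Sum>i<k. card {e \<in> S. e \<in> M i})"
    using assms by (simp add: sum_card_filter_swap)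
  finally show ?thesis
    by (simp add: Collect_conj_eq Int_commute)
qed

lemma cover_count_at_degree_3_vertex:
  assumes pms: "\<forall>i<k. perfect_matching G (M i)" and covers: "(\<Union>i<k. M i) = edges G"
    and x: "x \<in> verts G" "card (incident G x) = 3" and e: "e \<in> incident G x"
  shows "cover_count M k e + 2 \<le> k"
proof -
  have fin: "finite (incident G x)"
    using x(2) by (simp add: card_ge_0_finite)
  have "(\<Sum>f\<in>incident G x. cover_count M k f) = (\<Sum>i<k. card (M i \<inter> incident G x))"
    using fin by (rule sum_cover_count)
  also have "\<dots> = k"
    using pms x(1) by (simp add: perfect_matching_iff_card_incident)
  finally have "k = cover_count M k e + (\<Sum>f\<in>incident G x - {e}. cover_count M k f)"
    using fin e by (simp add: sum.remove)
  moreover have "(\<Sum>f\<in>incident G x - {e}. 1) \<le> (\<Sum>f\<in>incident G x - {e}. cover_count M k f)"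
    using covers cover_count_pos[of _ M k]
    by (intro sum_mono) (auto simp: incident_def Suc_le_eq)
  ultimately show ?thesis
    using x(2) e fin by simp
qed

text \<open>K arises from G by contracting the part of G beyond the edge set C to the vertex w,
  with \<psi> mapping the remaining edges of G onto those of K.\<close>
lemma pm_index_contraction_le:
  assumes pms: "\<forall>i<k. perfect_matching G (M i)" and covers: "(\<Union>i<k. M i) = edges G"
    and loopless: "\<forall>e\<in>edges K. \<not> is_loop K e"
    and E: "E \<subseteq> edges G" "inj_on \<psi> E" "\<psi> ` E = edges K"
    and C: "C \<subseteq> E" "incident K w = \<psi> ` C" "\<forall>i<k. card (M i \<inter> C) = 1"
    and other: "\<forall>y\<in>verts K - {w}. \<exists>y'\<in>verts G. incident G y' \<subseteq> E \<and> incident K y = \<psi> ` incident G y'"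
  shows "pm_index K \<le> k"
proof (rule pm_index_le)
  have card_image_match: "card (\<psi> ` (M i \<inter> E) \<inter> \<psi> ` D) = card (M i \<inter> D)" if "D \<subseteq> E" for i D
  proof -
    have "\<psi> ` (M i \<inter> E) \<inter> \<psi> ` D = \<psi> ` (M i \<inter> D)"
      using E(2) that by (auto simp: inj_on_image_Int[symmetric] Int_absorb2 Int_assoc)
    moreover have "inj_on \<psi> (M i \<inter> D)"
      using E(2) that by (auto intro: inj_on_subset)
    ultimately show ?thesis
      by (simp add: card_image)
  qed
  show "\<forall>i<k. perfect_matching K (\<psi> ` (M i \<inter> E))"
  proof (intro allI impI)
    fix i assume i: "i < k"
    have "card (\<psi> ` (M i \<inter> E) \<inter> incident K y) = 1" if y: "y \<in> verts K" for y
    proof (cases "y = w")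
      case True
      then show ?thesis
        using C i card_image_match by simp
    next
      case False
      then obtain y' where "y' \<in> verts G" "incident G y' \<subseteq> E" "incident K y = \<psi> ` incident G y'"
        using other y by blast
      then show ?thesis
        using pms i card_image_match by (simp add: perfect_matching_iff_card_incident)
    qed
    then show "perfect_matching K (\<psi> ` (M i \<inter> E))"
      using E(3) loopless by (auto simp: perfect_matching_iff_card_incident)
  qed
  have "(\<Union>i<k. \<psi> ` (M i \<inter> E)) = \<psi> ` ((\<Union>i<k. M i) \<inter> E)"
    by blast
  then show "(\<Union>i<k. \<psi> ` (M i \<inter> E)) = edges K"
    using covers E by (simp add: Int_absorb1)
qed

lemma verts_three_sum:
  "verts (three_sum H u K v \<sigma>) = Inl ` (verts H - {u}) \<union> Inr ` (verts K - {v})"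
  by (simp add: three_sum_def)

lemma edges_three_sum:
  "edges (three_sum H u K v \<sigma>) = Inl ` edges H \<union> Inr ` (edges K - incident K v)"
  by (simp add: three_sum_def)

lemma ends_three_sum_Inl:
  "ends (three_sum H u K v \<sigma>) (Inl e) = (if u \<in> ends H e
      then {Inl (other_end H u e), Inr (other_end K v (\<sigma> e))} else Inl ` ends H e)"
  by (simp add: three_sum_def)

lemma ends_three_sum_Inr: "ends (three_sum H u K v \<sigma>) (Inr f) = Inr ` ends K f"
  by (simp add: three_sum_def)

lemmas three_sum_simps = verts_three_sum edges_three_sum ends_three_sum_Inl ends_three_sum_Inr

locale two_connected_cubic_three_sum =
  fixes H :: "('v, 'e) mgraph" and K :: "('w, 'f) mgraph"
    and u :: 'v and v :: 'w and \<sigma> :: "'e \<Rightarrow> 'f"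
  assumes H: "two_connected H" "cubic H" and K: "two_connected K" "cubic K"
    and u: "u \<in> verts H" and v: "v \<in> verts K"
    and \<sigma>: "bij_betw \<sigma> (incident H u) (incident K v)"
begin

abbreviation G where "G \<equiv> three_sum H u K v \<sigma>"

lemma wf_H: "wf_mgraph H" and wf_K: "wf_mgraph K"
  using H K by (simp_all add: cubic_def)

lemma ends_cut_edge_H:
  "g \<in> incident H u \<Longrightarrow>
     ends H g = {u, other_end H u g} \<and> other_end H u g \<noteq> u \<and> other_end H u g \<in> verts H"
  using two_connected_cubic_ends_incident[OF H] .

lemma ends_cut_edge_K:
  "g \<in> incident H u \<Longrightarrow>
     ends K (\<sigma> g) = {v, other_end K v (\<sigma> g)} \<and> other_end K v (\<sigma> g) \<noteq> v
       \<and> other_end K v (\<sigma> g) \<in> verts K"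
  using two_connected_cubic_ends_incident[OF K] \<sigma> by (auto simp: bij_betw_def)

lemma Inl_mem_ends_Inl_iff:
  assumes "x \<noteq> u" "g \<in> edges H"
  shows "Inl x \<in> ends G (Inl g) \<longleftrightarrow> x \<in> ends H g"
  using assms ends_cut_edge_H[of g] by (auto simp: three_sum_simps incident_def)

lemma Inr_mem_ends_Inl_iff:
  assumes "y \<noteq> v" "g \<in> edges H"
  shows "Inr y \<in> ends G (Inl g) \<longleftrightarrow> g \<in> incident H u \<and> y \<in> ends K (\<sigma> g)"
  using assms ends_cut_edge_K[of g] by (auto simp: three_sum_simps incident_def)

lemma ends_three_sum_wf:
  assumes e: "e \<in> edges G"
  shows "ends G e \<subseteq> verts G \<and> 1 \<le> card (ends G e) \<and> card (ends G e) \<le> 2"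
proof (cases e)
  case (Inl g)
  show ?thesis
  proof (cases "g \<in> incident H u")
    case True
    then have "ends G e = {Inl (other_end H u g), Inr (other_end K v (\<sigma> g))}"
      using Inl by (simp add: three_sum_simps incident_def)
    then show ?thesis
      using ends_cut_edge_H[OF True] ends_cut_edge_K[OF True] by (simp add: three_sum_simps)
  next
    case False
    then have g: "g \<in> edges H" "u \<notin> ends H g"
      using e Inl by (auto simp: three_sum_simps incident_def)
    moreover have "ends H g \<subseteq> verts H - {u}" "1 \<le> card (ends H g)" "card (ends H g) \<le> 2"
      using g wf_H by (auto simp: wf_mgraph_def)
    ultimately show ?thesis
      using Inl by (auto simp: three_sum_simps card_image)
  qed
next
  case (Inr f)
  then have "f \<in> edges K" "v \<notin> ends K f"
    using e by (auto simp: three_sum_simps incident_def)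
  moreover have "ends K f \<subseteq> verts K - {v}" "1 \<le> card (ends K f)" "card (ends K f) \<le> 2"
    using calculation wf_K by (auto simp: wf_mgraph_def)
  ultimately show ?thesis
    using Inr by (auto simp: three_sum_simps card_image)
qed

lemma wf_three_sum: "wf_mgraph G"
  using wf_H wf_K ends_three_sum_wf by (auto simp: wf_mgraph_def verts_three_sum edges_three_sum)

lemma incident_three_sum_Inl:
  assumes "x \<in> verts H" "x \<noteq> u"
  shows "incident G (Inl x) = Inl ` incident H x"
  using assms Inl_mem_ends_Inl_iff by (auto simp: incident_def edges_three_sum ends_three_sum_Inr)

lemma incident_three_sum_Inr:
  assumes "y \<in> verts K" "y \<noteq> v"
  shows "incident G (Inr y)
    = Inl ` {g \<in> incident H u. y \<in> ends K (\<sigma> g)} \<union> Inr ` (incident K y - incident K v)"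
  using assms Inr_mem_ends_Inl_iff by (auto simp: incident_def edges_three_sum ends_three_sum_Inr)

lemma principal_cut_subset_edges: "principal_cut H u \<subseteq> edges G"
  by (auto simp: principal_cut_def incident_def three_sum_simps)

lemma card_principal_cut: "card (principal_cut H u) = 3"
  using two_connected_cubic_card_incident[OF H u]
  by (simp add: principal_cut_def card_image)

lemma principal_cut_iff_one_end_in_H_side:
  assumes e: "e \<in> edges G" "\<not> is_loop G e"
  shows "card (ends G e \<inter> Inl ` (verts H - {u})) = 1 \<longleftrightarrow> e \<in> principal_cut H u"
proof (cases e)
  case (Inl g)
  show ?thesis
  proof (cases "g \<in> incident H u")
    case True
    then have "ends G e \<inter> Inl ` (verts H - {u}) = {Inl (other_end H u g)}"
      using Inl ends_cut_edge_H[OF True] by (auto simp: ends_three_sum_Inl incident_def)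
    then show ?thesis
      using Inl True by (simp add: principal_cut_def)
  next
    case False
    then have "g \<in> edges H" "u \<notin> ends H g"
      using e Inl by (auto simp: edges_three_sum incident_def)
    then have "ends G e \<subseteq> Inl ` (verts H - {u})"
      using Inl wf_H by (auto simp: ends_three_sum_Inl wf_mgraph_def)
    moreover have "card (ends G e) = 2"
      using e wf_three_sum by (auto simp: wf_mgraph_def is_loop_def)
    ultimately show ?thesis
      using Inl False by (simp add: principal_cut_def Int_absorb2 inj_image_mem_iff)
  qed
next
  case (Inr f)
  then have "ends G e \<inter> Inl ` (verts H - {u}) = {}"
    by (auto simp: ends_three_sum_Inr)
  then show ?thesis
    using Inr by (auto simp: principal_cut_def)
qed

lemma perfect_matching_card_principal_cut_odd:
  assumes pm: "perfect_matching G M"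
  shows "odd (card (M \<inter> principal_cut H u))"
proof -
  define A :: "('v + 'w) set" where "A = Inl ` (verts H - {u})"
  have "finite (verts H)"
    using wf_H by (simp add: wf_mgraph_def)
  then have "card A = card (verts H) - 1" "card (verts H) > 0"
    using u by (auto simp: A_def card_image card_gt_0_iff)
  then have "odd (card A)"
    using cubic_even_card_verts[OF H(2)] by presburger
  then have "odd (card {e \<in> M. card (ends G e \<inter> A) = 1})"
    using perfect_matching_card_odd_cut[OF wf_three_sum pm] by (simp add: A_def verts_three_sum)
  moreover have "card (ends G e \<inter> A) = 1 \<longleftrightarrow> e \<in> principal_cut H u" if "e \<in> M" for e
    using that pm principal_cut_iff_one_end_in_H_side by (auto simp: A_def perfect_matching_def)
  then have "{e \<in> M. card (ends G e \<inter> A) = 1} = M \<inter> principal_cut H u"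
    by blast
  ultimately show ?thesis
    by simp
qed

lemma cover_count_principal_cut_le:
  assumes cover: "pm_4cover G M" and c: "c \<in> principal_cut H u"
  shows "cover_count M 4 c \<le> 2"
proof -
  obtain g where g: "g \<in> incident H u" "c = Inl g"
    using c by (auto simp: principal_cut_def)
  define x where "x = other_end H u g"
  have x: "x \<in> verts H" "x \<noteq> u" "g \<in> incident H x"
    using ends_cut_edge_H[OF g(1)] g(1) by (auto simp: x_def incident_def)
  have "Inl x \<in> verts G" "card (incident G (Inl x)) = 3" "c \<in> incident G (Inl x)"
    using x g two_connected_cubic_card_incident[OF H x(1)]
    by (auto simp: verts_three_sum incident_three_sum_Inl card_image)
  then show ?thesis
    using cover cover_count_at_degree_3_vertex[of 4 G M "Inl x" c] by (simp add: pm_4cover_def)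
qed

lemma principal_cut_met_once:
  assumes cover: "pm_4cover G M" and c: "c \<in> principal_cut H u"
    and not_double: "\<not> doubly_covered M c"
  shows "\<forall>i<4. card (M i \<inter> principal_cut H u) = 1"
proof -
  let ?C = "principal_cut H u"
  have fin: "finite ?C"
    by (rule card_ge_0_finite) (simp add: card_principal_cut)
  have le2: "cover_count M 4 c' \<le> 2" if "c' \<in> ?C" for c'
    using cover_count_principal_cut_le[OF cover that] .
  have "(\<Sum>i<4. card (M i \<inter> ?C)) = (\<Sum>c'\<in>?C. cover_count M 4 c')"
    using fin by (rule sum_cover_count[symmetric])
  also have "\<dots> = cover_count M 4 c + (\<Sum>c'\<in>?C - {c}. cover_count M 4 c')"
    using fin c by (rule sum.remove)
  also have "\<dots> \<le> 1 + 2 * 2"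
  proof (rule add_mono)
    show "cover_count M 4 c \<le> 1"
      using le2[OF c] not_double by (simp add: doubly_covered_iff_cover_count)
    show "(\<Sum>c'\<in>?C - {c}. cover_count M 4 c') \<le> 2 * 2"
      using sum_bounded_above[of "?C - {c}" "cover_count M 4" 2] le2 c fin
      by (simp add: card_principal_cut)
  qed
  finally have "(\<Sum>i<4. card (M i \<inter> ?C)) < 4 + 2"
    by simp
  moreover have "\<forall>i<4. odd (card (M i \<inter> ?C))"
    using cover perfect_matching_card_principal_cut_odd by (simp add: pm_4cover_def)
  ultimately show ?thesis
    using odd_summands_eq_1[of 4 "\<lambda>i. card (M i \<inter> ?C)"] by blast
qed

lemma pm_index_H_le:
  assumes cover: "pm_4cover G M" and once: "\<forall>i<4. card (M i \<inter> principal_cut H u) = 1"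
  shows "pm_index H \<le> 4"
proof (rule pm_index_contraction_le)
  show "\<forall>i<4. perfect_matching G (M i)" "(\<Union>i<4. M i) = edges G"
    using cover by (simp_all add: pm_4cover_def)
  show "\<forall>e\<in>edges H. \<not> is_loop H e"
    using two_connected_cubic_no_loop[OF H] by blast
  show "Inl ` edges H \<subseteq> edges G" "inj_on projl (Inl ` edges H)" "projl ` Inl ` edges H = edges H"
    by (auto simp: edges_three_sum inj_on_def image_image)
  show "principal_cut H u \<subseteq> Inl ` edges H" "incident H u = projl ` principal_cut H u"
    by (auto simp: principal_cut_def incident_def image_image)
  show "\<forall>i<4. card (M i \<inter> principal_cut H u) = 1"
    using once .
  show "\<forall>x\<in>verts H - {u}. \<exists>x'\<in>verts G.
          incident G x' \<subseteq> Inl ` edges H \<and> incident H x = projl ` incident G x'"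
  proof
    fix x assume x: "x \<in> verts H - {u}"
    then have "incident G (Inl x) = Inl ` incident H x"
      by (simp add: incident_three_sum_Inl)
    moreover have "incident H x \<subseteq> edges H"
      by (auto simp: incident_def)
    ultimately show "\<exists>x'\<in>verts G. incident G x' \<subseteq> Inl ` edges H \<and> incident H x = projl ` incident G x'"
      using x by (intro bexI[of _ "Inl x"]) (auto simp: verts_three_sum image_image)
  qed
qed

lemma image_principal_cut_eq_incident_K: "case_sum \<sigma> id ` principal_cut H u = incident K v"
  using \<sigma> by (simp add: principal_cut_def image_image bij_betw_def)

lemma incident_K_eq_image_incident_three_sum:
  assumes "y \<in> verts K" "y \<noteq> v"
  shows "incident K y = case_sum \<sigma> id ` incident G (Inr y)"
proof -
  have "\<sigma> ` {g \<in> incident H u. y \<in> ends K (\<sigma> g)} = {f \<in> \<sigma> ` incident H u. y \<in> ends K f}"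
    by blast
  also have "\<dots> = incident K v \<inter> incident K y"
    using \<sigma> by (auto simp: bij_betw_def incident_def)
  finally have "case_sum \<sigma> id ` incident G (Inr y)
      = (incident K v \<inter> incident K y) \<union> (incident K y - incident K v)"
    using assms by (simp add: incident_three_sum_Inr image_Un image_image)
  then show ?thesis
    by blast
qed

lemma pm_index_K_le:
  assumes cover: "pm_4cover G M" and once: "\<forall>i<4. card (M i \<inter> principal_cut H u) = 1"
  shows "pm_index K \<le> 4"
proof (rule pm_index_contraction_le)
  let ?E = "principal_cut H u \<union> Inr ` (edges K - incident K v)"
  let ?\<psi> = "case_sum \<sigma> id"
  show "\<forall>i<4. perfect_matching G (M i)" "(\<Union>i<4. M i) = edges G"
    using cover by (simp_all add: pm_4cover_def)
  show "\<forall>e\<in>edges K. \<not> is_loop K e"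
    using two_connected_cubic_no_loop[OF K] by blast
  show "?E \<subseteq> edges G"
    using principal_cut_subset_edges by (auto simp: edges_three_sum)
  have "inj_on ?\<psi> (principal_cut H u)"
    using \<sigma> by (auto simp: principal_cut_def bij_betw_def inj_on_def)
  moreover have "inj_on ?\<psi> (Inr ` (edges K - incident K v))"
    by (auto simp: inj_on_def)
  moreover have "?\<psi> ` Inr ` (edges K - incident K v) \<inter> incident K v = {}"
    by auto
  ultimately show "inj_on ?\<psi> ?E"
    using image_principal_cut_eq_incident_K unfolding inj_on_Un by blast
  have "?\<psi> ` ?E = incident K v \<union> (edges K - incident K v)"
    unfolding image_Un image_principal_cut_eq_incident_K by (simp add: image_image)
  then show "?\<psi> ` ?E = edges K"
    by (auto simp: incident_def)
  show "principal_cut H u \<subseteq> ?E" "incident K v = ?\<psi> ` principal_cut H u"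
    using image_principal_cut_eq_incident_K by auto
  show "\<forall>i<4. card (M i \<inter> principal_cut H u) = 1"
    using once .
  show "\<forall>y\<in>verts K - {v}. \<exists>y'\<in>verts G. incident G y' \<subseteq> ?E \<and> incident K y = ?\<psi> ` incident G y'"
  proof
    fix y assume y: "y \<in> verts K - {v}"
    have "incident G (Inr y) \<subseteq> ?E"
      using y by (simp add: incident_three_sum_Inr) (auto simp: principal_cut_def incident_def)
    then show "\<exists>y'\<in>verts G. incident G y' \<subseteq> ?E \<and> incident K y = ?\<psi> ` incident G y'"
      using y incident_K_eq_image_incident_three_sum
      by (intro bexI[of _ "Inr y"]) (auto simp: verts_three_sum)
  qed
qed

end

theorem lemma6p3:
  fixes H :: "('v, 'e) mgraph" and K :: "('w, 'f) mgraph"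
    and u :: 'v and v :: 'w and \<sigma> :: "'e \<Rightarrow> 'f"
  assumes "two_connected H" and "cubic H"
    and "two_connected K" and "cubic K"
    and "u \<in> verts H" and "v \<in> verts K"
    and "bij_betw \<sigma> (incident H u) (incident K v)"
    and "pm_index (three_sum H u K v \<sigma>) = 4"
    and "pm_index H \<ge> 5 \<or> pm_index K \<ge> 5"
  shows "\<forall>M. pm_4cover (three_sum H u K v \<sigma>) M \<longrightarrow>
           (\<forall>e\<in>principal_cut H u. doubly_covered M e)"
proof (intro allI impI ballI)
  fix M :: "nat \<Rightarrow> ('e + 'f) set" and e :: "'e + 'f"
  assume cover: "pm_4cover (three_sum H u K v \<sigma>) M" and e: "e \<in> principal_cut H u"
  interpret two_connected_cubic_three_sum H K u v \<sigma>
    using assms(1-7) by unfold_locales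
  show "doubly_covered M e"
  proof (rule ccontr)
    assume "\<not> doubly_covered M e"
    then have "\<forall>i<4. card (M i \<inter> principal_cut H u) = 1"
      using principal_cut_met_once[OF cover e] by blast
    then have "pm_index H \<le> 4" "pm_index K \<le> 4"
      using pm_index_H_le[OF cover] pm_index_K_le[OF cover] by blast+
    with assms(9) show False
      by linarith
  qed
qed

end
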